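(* $\mathcal{FSTA}^{S}_{\mathcal{F.V.}} > \mathcal{FSTA}^{S}_{\mathcal{L.V.}}$, i.e. the model $\mathcal{FSTA}$ under the semi-synchronous scheduler with full visibility is computationally more powerful than the model $\mathcal{FSTA}$ under the semi-synchronous scheduler with limited visibility.
   Context: Robots are anonymous, identical, autonomous computational entities viewed as points moving in the Euclidean plane. Each has its own local coordinate system, with no agreement between robots and no common chirality, and perceives itself at its origin. Robots operate in Look-Compute-Move cycles. In Look a robot takes an instantaneous snapshot of the positions (and visible lights, if any) of the robots it can see. In Compute it runs the common algorithm on the snapshot to obtain a destination. In Move it moves there. Models: - $\mathcal{OBLOT}$: robots are oblivious (no memory of previous cycles) and silent (no means of communication). - $\mathcal{LUMI}$: each robot carries a persistent light whose color is taken from a finite set and is set at the end of Compute; the light is visible to the robot itself and to the other robots. - $\mathcal{FSTA}$: the light is internal, visible only to its owner. It acts as a finite persistent state; there is no communication. - $\mathcal{FCOM}$: the light is visible only to the other robots. A robot does not see its own light and is otherwise oblivious. Schedulers: time is divided into rounds. Under the semi-synchronous scheduler $S$ (SSYNCH), in each round an adversarially chosen set of robots is activated and they perform one full cycle in perfect synchronization; every robot is activated infinitely often. Under the fully synchronous scheduler $F$ (FSYNCH), every robot is activated in every round. Visibility: - Full visibility $\mathcal{F.V.}$: every robot sees all robots. - Limited visibility $\mathcal{L.V.}$: a robot sees only the robots within a fixed distance $V_r$ of its current position, with $V_r$ the same for all robots. The visibility graph (robots adjacent iff they see each other) of the initial configuration is assumed connected. Relations: $\mathcal{M}^X_V$ denotes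 model $\mathcal{M}$ under scheduler $X$ with visibility $V$. For a team $R$ of robots, $Task(\mathcal{M},X,V;R)$ is the set of problems (tasks where robots must form some configuration(s) subject to conditions) solvable by $R$ in that setting. $\mathcal{R}$ is the set of all teams, and $\mathcal{R}_n$ the set of teams of size $n$. - $\mathcal{M}^{X_1}_{V_1} \ge \mathcal{N}^{X_2}_{V_2}$ if for all $R\in\mathcal{R}$, $Task(\mathcal{M},X_1,V_1;R)\supseteq Task(\mathcal{N},X_2,V_2;R)$. - $>$ means $\ge$ holds and there exists $R\in\mathcal{R}$ with $Task(\mathcal{M},X_1,V_1;R)\setminus Task(\mathcal{N},X_2,V_2;R)\neq\emptyset$. - $\perp$ (incomparable) means there exist $R_1,R_2\in\mathcal{R}$ with $Task(\mathcal{M},X_1,V_1;R_1)\setminus Task(\mathcal{N},X_2,V_2;R_1)\neq\emptyset$ and $Task(\mathcal{N},X_2,V_2;R_2)\setminus Task(\mathcal{M},X_1,V_1;R_2)\neq\emptyset$. *)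

theory Defs
  imports Complex_Main
begin

text \<open>
  A team of n robots is indexed by 0..n-1 (indices are only for the global
  observer; robots are anonymous and never see indices).
  Model FSTA: each robot has a persistent internal state (its own light)
  from a finite set of colours, visible only to itself.
\<close>

text \<open>The robot is always at its own origin.
  Local frames disagree arbitrarily in orientation and chirality.\<close>

type_synonym frame = "complex \<times> bool"

definition to_local :: "frame \<Rightarrow> complex \<Rightarrow> complex" where
  "to_local F z = fst F * (if snd F then cnj z else z)"

definition to_global :: "frame \<Rightarrow> complex \<Rightarrow> complex" where
  "to_global F w = (let z = cnj (fst F) * w in if snd F then cnj z else z)"

datatype visibility = FullVis | LimitedVis

fun sees :: "visibility \<Rightarrow> real \<Rightarrow> complex \<Rightarrow> complex \<Rightarrow> bool" where
  "sees FullVis V x y = True"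
| "sees LimitedVis V x y = (cmod (y - x) \<le> V)"

datatype scheduler = SSYNCH | FSYNCH

text \<open>Admissible activation schedules: A t is the set of robots activated in round t.\<close>
fun admissible_schedule :: "scheduler \<Rightarrow> nat \<Rightarrow> (nat \<Rightarrow> nat set) \<Rightarrow> bool" where
  "admissible_schedule SSYNCH n A =
     ((\<forall>t. A t \<subseteq> {..<n}) \<and> (\<forall>i<n. \<forall>t. \<exists>t'\<ge>t. i \<in> A t'))"
| "admissible_schedule FSYNCH n A = (\<forall>t. A t = {..<n})"

text \<open>An FSTA algorithm: a finite set of internal colours C, the initial colour s0,
  and the Compute function mapping (own colour, snapshot in local coordinates) to
  (destination in local coordinates, new colour).\<close>

type_synonym algorithm = "nat set \<times> nat \<times> (nat \<Rightarrow> complex set \<Rightarrow> complex \<times> nat)"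

definition valid_algorithm :: "algorithm \<Rightarrow> bool" where
  "valid_algorithm alg = (case alg of (C, s0, f) \<Rightarrow>
     finite C \<and> s0 \<in> C \<and> (\<forall>s\<in>C. \<forall>S. snd (f s S) \<in> C))"

text \<open>Snapshot of robot i: positions (in its local frame, itself at the origin) of the
  robots it can see. Positions only; no lights of others are visible in FSTA.\<close>
definition snapshot ::
  "nat \<Rightarrow> visibility \<Rightarrow> real \<Rightarrow> (nat \<Rightarrow> frame) \<Rightarrow> (nat \<Rightarrow> complex) \<Rightarrow> nat \<Rightarrow> complex set" where
  "snapshot n vis V F p i =
     {to_local (F i) (p j - p i) | j. j < n \<and> sees vis V (p i) (p j)}"

text \<open>Execution: configuration (positions, internal colours) after t rounds.
  Activated robots perform a full Look-Compute-Move cycle synchronously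
  within the round and reach their destination.\<close>
primrec exec ::
  "nat \<Rightarrow> visibility \<Rightarrow> real \<Rightarrow> algorithm \<Rightarrow> (nat \<Rightarrow> complex) \<Rightarrow> (nat \<Rightarrow> nat set)
   \<Rightarrow> (nat \<Rightarrow> frame) \<Rightarrow> nat \<Rightarrow> (nat \<Rightarrow> complex) \<times> (nat \<Rightarrow> nat)" where
  "exec n vis V alg P0 A F 0 = (P0, (\<lambda>i. fst (snd alg)))"
| "exec n vis V alg P0 A F (Suc t) =
     (let (p, s) = exec n vis V alg P0 A F t;
          f = snd (snd alg);
          out = (\<lambda>i. f (s i) (snapshot n vis V F p i))
      in ((\<lambda>i. if i \<in> A t then p i + to_global (F i) (fst (out i)) else p i),
          (\<lambda>i. if i \<in> A t then snd (out i) else s i)))"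

text \<open>Admissible initial configurations for a team (n, V): n robots at distinct
  positions whose visibility graph (robots adjacent iff at distance \<le> V) is
  connected. Unused indices are set to 0.\<close>
definition valid_initial :: "nat \<Rightarrow> real \<Rightarrow> (nat \<Rightarrow> complex) \<Rightarrow> bool" where
  "valid_initial n V P0 =
     (inj_on P0 {..<n} \<and> (\<forall>i\<ge>n. P0 i = 0) \<and>
      (\<forall>i<n. \<forall>j<n. (\<lambda>a b. a < n \<and> b < n \<and> cmod (P0 a - P0 b) \<le> V)\<^sup>*\<^sup>* i j))"

definition valid_frames :: "nat \<Rightarrow> (nat \<Rightarrow> frame) \<Rightarrow> bool" where
  "valid_frames n F = (\<forall>i<n. cmod (fst (F i)) = 1)"

text \<open>A problem is a (temporal geometric) predicate on the evolution of the robots'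
  positions: trajectory t i = position of robot i after round t.\<close>
type_synonym problem = "(nat \<Rightarrow> nat \<Rightarrow> complex) \<Rightarrow> bool"

text \<open>A team is (n, V): n robots with common visibility radius V > 0.\<close>
type_synonym team = "nat \<times> real"

definition teams :: "team set" where
  "teams = {(n, V). 0 < n \<and> 0 < V}"

definition solves_FSTA ::
  "scheduler \<Rightarrow> visibility \<Rightarrow> team \<Rightarrow> algorithm \<Rightarrow> problem \<Rightarrow> bool" where
  "solves_FSTA X vis R alg P = (case R of (n, V) \<Rightarrow>
     (\<forall>P0 A F. valid_initial n V P0 \<and> admissible_schedule X n A \<and> valid_frames n F \<longrightarrow>
        P (\<lambda>t. fst (exec n vis V alg P0 A F t))))"

definition Task_FSTA :: "scheduler \<Rightarrow> visibility \<Rightarrow> team \<Rightarrow> problem set" where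
  "Task_FSTA X vis R = {P. \<exists>alg. valid_algorithm alg \<and> solves_FSTA X vis R alg P}"

definition model_ge :: "(team \<Rightarrow> problem set) \<Rightarrow> (team \<Rightarrow> problem set) \<Rightarrow> bool" where
  "model_ge T1 T2 = (\<forall>R\<in>teams. T2 R \<subseteq> T1 R)"

definition model_gt :: "(team \<Rightarrow> problem set) \<Rightarrow> (team \<Rightarrow> problem set) \<Rightarrow> bool" where
  "model_gt T1 T2 = (model_ge T1 T2 \<and> (\<exists>R\<in>teams. T1 R - T2 R \<noteq> {}))"

end

theory Submission
  imports Defs
begin

text \<open>
  Inclusion: a robot with full visibility can simulate limited visibility by discarding
  every point of its snapshot farther than V from its origin, so every problem solvable
  under limited visibility remains solvable.

  Strictness: let the problem be "move iff the initial configuration has diameter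
  greater than 12". Under full visibility each robot sees the diameter and acts on it.
  Under limited visibility with V = 5, take the four robots (-3,4), 0, 5, (8,\<plusminus>4): the two
  configurations have diameters 11 and sqrt 185, yet if robots 2 and 3 use
  reflected frames in the second one, every robot gets the same snapshot in both
  (robots 0 and 1 cannot see robot 3). Under the schedule activating everybody in every
  round, the two executions then stay indistinguishable, so the robots cannot move in
  the second configuration when they must stay still in the first.
\<close>

lemma to_local_diff: "to_local F a - to_local F b = to_local F (a - b)"
  by (simp add: to_local_def right_diff_distrib)

lemma norm_to_local: "cmod (fst F) = 1 \<Longrightarrow> cmod (to_local F z) = cmod z"
  by (simp add: to_local_def norm_mult)

lemma norm_to_global: "cmod (fst F) = 1 \<Longrightarrow> cmod (to_global F w) = cmod w"
  by (simp add: to_global_def Let_def norm_mult)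

lemma to_global_0 [simp]: "to_global F 0 = 0"
  by (simp add: to_global_def Let_def)

lemma admissible_schedule_subset: "admissible_schedule X n A \<Longrightarrow> A t \<subseteq> {..<n}"
  by (cases X) auto

lemma admissible_schedule_fair:
  "admissible_schedule X n A \<Longrightarrow> i < n \<Longrightarrow> \<exists>t'\<ge>t. i \<in> A t'"
  by (cases X) auto

lemma admissible_schedule_all: "admissible_schedule X n (\<lambda>_. {..<n})"
  by (cases X) auto

lemma fst_exec_Suc:
  "fst (exec n vis V alg P0 A F (Suc t)) =
    (\<lambda>i. if i \<in> A t
         then fst (exec n vis V alg P0 A F t) i + to_global (F i)
           (fst (snd (snd alg) (snd (exec n vis V alg P0 A F t) i)
              (snapshot n vis V F (fst (exec n vis V alg P0 A F t)) i)))
         else fst (exec n vis V alg P0 A F t) i)"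
  by (simp add: case_prod_beta Let_def)

lemma snd_exec_Suc:
  "snd (exec n vis V alg P0 A F (Suc t)) =
    (\<lambda>i. if i \<in> A t
         then snd (snd (snd alg) (snd (exec n vis V alg P0 A F t) i)
           (snapshot n vis V F (fst (exec n vis V alg P0 A F t)) i))
         else snd (exec n vis V alg P0 A F t) i)"
  by (simp add: case_prod_beta Let_def)

declare exec.simps(2) [simp del]

lemma rtranclp_path:
  assumes step: "\<And>k. k < m \<Longrightarrow> R k (Suc k)" and "symp R" and "i \<le> m" "j \<le> m"
  shows "R\<^sup>*\<^sup>* i j"
proof -
  have from_0: "k \<le> m \<Longrightarrow> R\<^sup>*\<^sup>* 0 k" for k
  proof (induction k)
    case (Suc k)
    then have "R\<^sup>*\<^sup>* 0 k" "R k (Suc k)"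
      using step by simp_all
    then show ?case by (rule rtranclp.rtrancl_into_rtrancl)
  qed simp
  have "R\<^sup>*\<^sup>* i 0"
    using from_0 \<open>i \<le> m\<close> symp_rtranclp[OF \<open>symp R\<close>] by (blast dest: sympD)
  then show ?thesis
    using from_0 \<open>j \<le> m\<close> by (blast intro: rtranclp_trans)
qed

definition restrict_view :: "real \<Rightarrow> algorithm \<Rightarrow> algorithm" where
  "restrict_view V alg = (fst alg, fst (snd alg), \<lambda>s S. snd (snd alg) s {z \<in> S. cmod z \<le> V})"

lemma valid_algorithm_restrict_view: "valid_algorithm alg \<Longrightarrow> valid_algorithm (restrict_view V alg)"
  by (auto simp: valid_algorithm_def restrict_view_def split: prod.splits)

lemma snapshot_LimitedVis_eq_restrict:
  assumes "valid_frames n F" "i < n"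
  shows "snapshot n LimitedVis V F p i = {z \<in> snapshot n FullVis V F p i. cmod z \<le> V}"
  using assms by (auto simp: snapshot_def valid_frames_def norm_to_local)

lemma exec_restrict_view:
  assumes "valid_frames n F" "\<And>t. A t \<subseteq> {..<n}"
  shows "exec n FullVis V (restrict_view V alg) P0 A F t = exec n LimitedVis V alg P0 A F t"
proof (induction t)
  case 0
  then show ?case by (simp add: restrict_view_def)
next
  case (Suc t)
  have "\<And>i p. i \<in> A t \<Longrightarrow>
      {z \<in> snapshot n FullVis V F p i. cmod z \<le> V} = snapshot n LimitedVis V F p i"
    using snapshot_LimitedVis_eq_restrict assms by blast
  then show ?case
    unfolding prod_eq_iff fst_exec_Suc snd_exec_Suc Suc
    by (intro conjI ext) (simp_all add: restrict_view_def)
qed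

lemma Task_FSTA_LimitedVis_subset_FullVis:
  "Task_FSTA X LimitedVis R \<subseteq> Task_FSTA X FullVis R"
proof
  fix P assume "P \<in> Task_FSTA X LimitedVis R"
  then obtain alg where alg: "valid_algorithm alg" "solves_FSTA X LimitedVis R alg P"
    by (auto simp: Task_FSTA_def)
  obtain n V where R: "R = (n, V)" by fastforce
  have "solves_FSTA X FullVis R (restrict_view V alg) P"
    unfolding solves_FSTA_def R prod.case
  proof (intro allI impI)
    fix P0 A F assume run: "valid_initial n V P0 \<and> admissible_schedule X n A \<and> valid_frames n F"
    then have "exec n FullVis V (restrict_view V alg) P0 A F = exec n LimitedVis V alg P0 A F"
      using exec_restrict_view admissible_schedule_subset by blast
    then show "P (\<lambda>t. fst (exec n FullVis V (restrict_view V alg) P0 A F t))"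
      using alg(2) run by (simp add: solves_FSTA_def R)
  qed
  then show "P \<in> Task_FSTA X FullVis R"
    using valid_algorithm_restrict_view[OF alg(1)] unfolding Task_FSTA_def by blast
qed

definition diameter_exceeds :: "nat \<Rightarrow> real \<Rightarrow> (nat \<Rightarrow> complex) \<Rightarrow> bool" where
  "diameter_exceeds n D p = (\<exists>i<n. \<exists>j<n. D < cmod (p i - p j))"

definition move_iff_diameter_exceeds :: "nat \<Rightarrow> real \<Rightarrow> problem" where
  "move_iff_diameter_exceeds n D traj =
     (if diameter_exceeds n D (traj 0) then \<exists>t. traj t \<noteq> traj 0 else \<forall>t. traj t = traj 0)"

definition diameter_detector :: "real \<Rightarrow> algorithm" where
  "diameter_detector D =
     ({0}, 0, \<lambda>s S. (if \<exists>z\<in>S. \<exists>w\<in>S. D < cmod (z - w) then 1 else 0, 0))"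

lemma valid_algorithm_diameter_detector: "valid_algorithm (diameter_detector D)"
  by (simp add: valid_algorithm_def diameter_detector_def)

lemma snapshot_FullVis_diameter_exceeds:
  assumes "valid_frames n F" "i < n"
  shows "(\<exists>z\<in>snapshot n FullVis V F p i. \<exists>w\<in>snapshot n FullVis V F p i. D < cmod (z - w))
    \<longleftrightarrow> diameter_exceeds n D p"
proof -
  have isometry: "cmod (to_local (F i) (p j - p i) - to_local (F i) (p k - p i)) = cmod (p j - p k)"
    for j k
    using assms by (simp add: valid_frames_def to_local_diff norm_to_local)
  have "(\<exists>z\<in>snapshot n FullVis V F p i. \<exists>w\<in>snapshot n FullVis V F p i. D < cmod (z - w))
    \<longleftrightarrow> (\<exists>j<n. \<exists>k<n. D < cmod (to_local (F i) (p j - p i) - to_local (F i) (p k - p i)))"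
    unfolding snapshot_def by auto
  then show ?thesis
    unfolding isometry diameter_exceeds_def .
qed

lemma solves_move_iff_diameter_exceeds:
  "solves_FSTA X FullVis (n, V) (diameter_detector D) (move_iff_diameter_exceeds n D)"
  unfolding solves_FSTA_def prod.case
proof (intro allI impI)
  fix P0 A F assume run: "valid_initial n V P0 \<and> admissible_schedule X n A \<and> valid_frames n F"
  then have frames: "valid_frames n F" and sched: "admissible_schedule X n A" by simp_all
  let ?pos = "\<lambda>t. fst (exec n FullVis V (diameter_detector D) P0 A F t)"
  have step: "?pos (Suc t) i =
      (if i \<in> A t then P0 i + to_global (F i) (if diameter_exceeds n D P0 then 1 else 0) else P0 i)"
    if "?pos t = P0" for t i
  proof (cases "i \<in> A t")
    case True
    then have "i < n"
      using admissible_schedule_subset[OF sched] by blast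
    then show ?thesis
      unfolding fst_exec_Suc that
      using True snapshot_FullVis_diameter_exceeds[OF frames \<open>i < n\<close>, of V P0 D]
      by (simp add: diameter_detector_def)
  qed (simp add: fst_exec_Suc that)
  show "move_iff_diameter_exceeds n D ?pos"
  proof (cases "diameter_exceeds n D P0")
    case False
    have "?pos t = P0" for t
      by (induction t) (auto simp: step False)
    then show ?thesis
      using False by (simp add: move_iff_diameter_exceeds_def)
  next
    case True
    then obtain i where "i < n" by (auto simp: diameter_exceeds_def)
    then obtain t where "i \<in> A t"
      using admissible_schedule_fair[OF sched] by blast
    have "cmod (to_global (F i) 1) = 1"
      using frames \<open>i < n\<close> by (simp add: valid_frames_def norm_to_global)
    then have "?pos t \<noteq> P0 \<or> ?pos (Suc t) \<noteq> P0"
      using step[of t i] \<open>i \<in> A t\<close> True by force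
    then show ?thesis
      using True by (auto simp: move_iff_diameter_exceeds_def)
  qed
qed

lemma exec_indistinguishable_stationary:
  assumes sched: "\<And>t. A t \<subseteq> {..<n}" and frames: "valid_frames n F"
    and same_view: "\<And>i. i < n \<Longrightarrow> snapshot n vis V F' P0' i = snapshot n vis V F P0 i"
    and stationary: "\<And>t. fst (exec n vis V alg P0 A F t) = P0"
  shows "exec n vis V alg P0' A F' t = (P0', snd (exec n vis V alg P0 A F t))"
proof (induction t)
  case 0
  then show ?case by simp
next
  case (Suc t)
  let ?move = "\<lambda>i. fst (snd (snd alg) (snd (exec n vis V alg P0 A F t) i) (snapshot n vis V F P0 i))"
  have "?move i = 0" if "i \<in> A t" for i
  proof -
    have "i < n"
      using that sched by blast
    have "to_global (F i) (?move i) = 0"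
      using fun_cong[OF stationary[of "Suc t"], of i] that
      by (simp add: fst_exec_Suc stationary)
    then show ?thesis
      using norm_to_global[of "F i" "?move i"] frames \<open>i < n\<close> by (simp add: valid_frames_def)
  qed
  moreover have "\<And>i. i \<in> A t \<Longrightarrow> snapshot n vis V F' P0' i = snapshot n vis V F P0 i"
    using same_view sched by blast
  ultimately show ?case
    unfolding prod_eq_iff fst_exec_Suc snd_exec_Suc Suc
    by (intro conjI ext) (simp_all add: stationary)
qed

definition kite :: "real \<Rightarrow> nat \<Rightarrow> complex" where
  "kite y i = (if i = 0 then Complex (-3) 4 else if i = 1 then 0 else if i = 2 then 5
     else if i = 3 then Complex 8 y else 0)"

definition aligned_frames :: "nat \<Rightarrow> frame" where
  "aligned_frames i = (1, False)"

definition mirrored_frames :: "nat \<Rightarrow> frame" where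
  "mirrored_frames i = (1, 2 \<le> i)"

lemma less_4_cases: "(i::nat) < 4 \<longleftrightarrow> i = 0 \<or> i = 1 \<or> i = 2 \<or> i = 3"
  by auto

lemma cmod_le_iff_sum_squares:
  "0 \<le> c \<Longrightarrow> cmod z \<le> c \<longleftrightarrow> (Re z)\<^sup>2 + (Im z)\<^sup>2 \<le> c\<^sup>2"
  by (metis cmod_power2 norm_ge_zero power2_le_iff_abs_le abs_of_nonneg)

lemma valid_initial_kite:
  assumes "y\<^sup>2 = 16"
  shows "valid_initial 4 5 (kite y)"
proof -
  let ?R = "\<lambda>a b. a < 4 \<and> b < 4 \<and> cmod (kite y a - kite y b) \<le> 5"
  have "symp ?R"
    by (auto intro: sympI simp: norm_minus_commute)
  moreover have "?R k (Suc k)" if "k < 3" for k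
    using that assms unfolding less_4_cases
    by (auto simp: kite_def cmod_le_iff_sum_squares)
  ultimately have "?R\<^sup>*\<^sup>* i j" if "i < 4" "j < 4" for i j
    using that by (intro rtranclp_path[of 3]) auto
  moreover have "inj_on (kite y) {..<4}"
    unfolding inj_on_def lessThan_iff less_4_cases by (auto simp: kite_def complex_eq_iff)
  ultimately show ?thesis
    by (simp add: valid_initial_def kite_def)
qed

lemma not_diameter_exceeds_kite: "\<not> diameter_exceeds 4 12 (kite 4)"
proof -
  have "cmod (kite 4 i - kite 4 j) \<le> 12" if "i < 4" "j < 4" for i j
    using that unfolding less_4_cases
    by (elim disjE) (simp_all add: kite_def cmod_le_iff_sum_squares)
  then show ?thesis
    unfolding diameter_exceeds_def by (meson not_le)
qed

lemma diameter_exceeds_kite: "diameter_exceeds 4 12 (kite (-4))"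
proof -
  have "12 < cmod (kite (-4) 3 - kite (-4) 0)"
    using cmod_le_iff_sum_squares[of 12] by (simp add: kite_def not_le[symmetric])
  then show ?thesis
    unfolding diameter_exceeds_def by force
qed

lemma snapshot_mirrored_kite:
  assumes "i < 4"
  shows "snapshot 4 LimitedVis 5 mirrored_frames (kite (-4)) i =
    snapshot 4 LimitedVis 5 aligned_frames (kite 4) i"
proof -
  have "(cmod (kite (-4) j - kite (-4) i) \<le> 5 \<longleftrightarrow> cmod (kite 4 j - kite 4 i) \<le> 5) \<and>
     (cmod (kite 4 j - kite 4 i) \<le> 5 \<longrightarrow>
        to_local (mirrored_frames i) (kite (-4) j - kite (-4) i) =
        to_local (aligned_frames i) (kite 4 j - kite 4 i))" if "j < 4" for j
    using assms that unfolding less_4_cases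
    by (elim disjE) (simp_all add: kite_def aligned_frames_def mirrored_frames_def to_local_def
        cmod_le_iff_sum_squares complex_eq_iff)
  then show ?thesis
    unfolding snapshot_def sees.simps by (metis (no_types, lifting))
qed

lemma move_iff_diameter_exceeds_not_LimitedVis:
  "move_iff_diameter_exceeds 4 12 \<notin> Task_FSTA X LimitedVis (4, 5)"
proof
  assume "move_iff_diameter_exceeds 4 12 \<in> Task_FSTA X LimitedVis (4, 5)"
  then obtain alg where solves: "solves_FSTA X LimitedVis (4, 5) alg (move_iff_diameter_exceeds 4 12)"
    by (auto simp: Task_FSTA_def)
  let ?all = "\<lambda>_. {..<4::nat}"
  have run: "move_iff_diameter_exceeds 4 12 (\<lambda>t. fst (exec 4 LimitedVis 5 alg P0 ?all F t))"
    if "valid_initial 4 5 P0" "valid_frames 4 F" for P0 F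
    using solves that admissible_schedule_all[of X 4] unfolding solves_FSTA_def prod.case by blast
  have frames: "valid_frames 4 aligned_frames" "valid_frames 4 mirrored_frames"
    by (simp_all add: valid_frames_def aligned_frames_def mirrored_frames_def)
  have "fst (exec 4 LimitedVis 5 alg (kite 4) ?all aligned_frames t) = kite 4" for t
    using run[OF valid_initial_kite frames(1)] not_diameter_exceeds_kite
    by (simp add: move_iff_diameter_exceeds_def)
  then have "exec 4 LimitedVis 5 alg (kite (-4)) ?all mirrored_frames t =
      (kite (-4), snd (exec 4 LimitedVis 5 alg (kite 4) ?all aligned_frames t))" for t
    by (intro exec_indistinguishable_stationary[OF _ frames(1) snapshot_mirrored_kite]) simp_all
  moreover have "move_iff_diameter_exceeds 4 12
      (\<lambda>t. fst (exec 4 LimitedVis 5 alg (kite (-4)) ?all mirrored_frames t))"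
    using run[OF valid_initial_kite frames(2)] by simp
  ultimately show False
    using diameter_exceeds_kite by (simp add: move_iff_diameter_exceeds_def)
qed

theorem theorem4:
  shows "model_gt (Task_FSTA SSYNCH FullVis) (Task_FSTA SSYNCH LimitedVis)"
proof -
  have "model_ge (Task_FSTA SSYNCH FullVis) (Task_FSTA SSYNCH LimitedVis)"
    using Task_FSTA_LimitedVis_subset_FullVis by (simp add: model_ge_def)
  moreover have "(4, 5) \<in> teams"
    by (simp add: teams_def)
  moreover have "move_iff_diameter_exceeds 4 12 \<in> Task_FSTA SSYNCH FullVis (4, 5)"
    using valid_algorithm_diameter_detector solves_move_iff_diameter_exceeds
    unfolding Task_FSTA_def by blast
  ultimately show ?thesis
    using move_iff_diameter_exceeds_not_LimitedVis unfolding model_gt_def by blast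
qed

end
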